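(* Let $X$, $Z$ be topological vector spaces, $C\subseteq Z$ a nonempty closed convex cone with $C^-\neq\{0\}$, and $f:X\to\mathcal{F}(Z,C)$. If $f$ is Hausdorff upper continuous at $x_0\in X$, then for every $z^*\in Z^*$ the scalarization $\varphi_{(f,z^* )}:X\to\overline{\mathbb{R}}$ is lower semicontinuous at $x_0$.
   Context: $\mathcal{F}(Z,C)=\{A\subseteq Z\colon A=\operatorname{cl}(A+C)\}$ (empty set included); $C^-=\{z^*\in Z^*\colon z^*(z)\le0\ \forall z\in C\}$. $\varphi_{(f,z^* )}(x)=\inf_{z\in f(x)}(-z^*(z))$, with $\inf\emptyset=+\infty$. $f$ is Hausdorff upper continuous at $x_0$ iff for every neighborhood $V$ of $0$ in $Z$ there is a neighborhood $U$ of $x_0$ with $f(x)\subseteq f(x_0)+V$ for all $x\in U$. *)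

theory Defs
  imports "HOL-Analysis.Analysis"
begin

class topological_real_vector = real_vector + topological_ab_group_add +
  assumes continuous_scaleR_pair:
    "\<And>(a::real) (x::'a) W. open W \<Longrightarrow> a *\<^sub>R x \<in> W \<Longrightarrow>
       \<exists>e>0. \<exists>U. open U \<and> x \<in> U \<and> (\<forall>b y. \<bar>b - a\<bar> < e \<longrightarrow> y \<in> U \<longrightarrow> b *\<^sub>R y \<in> W)"

definition topo_dual :: "('z::topological_real_vector \<Rightarrow> real) set" where
  "topo_dual = {g. linear g \<and> continuous_on UNIV g}"

definition neg_polar :: "'z::topological_real_vector set \<Rightarrow> ('z \<Rightarrow> real) set" where
  "neg_polar C = {g \<in> topo_dual. \<forall>z\<in>C. g z \<le> 0}"

text \<open>F(Z,C) = {A \<subseteq> Z. A = cl(A + C)}, empty set included.\<close>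
definition upper_closed_sets :: "'z::topological_real_vector set \<Rightarrow> 'z set set" where
  "upper_closed_sets C = {A. A = closure {a + c | a c. a \<in> A \<and> c \<in> C}}"

text \<open>Scalarization, with inf over the empty set = +\<infinity>.\<close>
definition scalarization :: "('x \<Rightarrow> 'z::topological_real_vector set) \<Rightarrow> ('z \<Rightarrow> real) \<Rightarrow> 'x \<Rightarrow> ereal" where
  "scalarization f zs x = (INF z\<in>f x. ereal (- zs z))"

definition hausdorff_upper_continuous_at ::
  "('x::topological_space \<Rightarrow> 'z::topological_real_vector set) \<Rightarrow> 'x \<Rightarrow> bool" where
  "hausdorff_upper_continuous_at f x0 \<longleftrightarrow>
     (\<forall>V. (\<exists>W. open W \<and> 0 \<in> W \<and> W \<subseteq> V) \<longrightarrow>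
        (\<exists>U. (\<exists>G. open G \<and> x0 \<in> G \<and> G \<subseteq> U) \<and>
             (\<forall>x\<in>U. f x \<subseteq> {a + v | a v. a \<in> f x0 \<and> v \<in> V})))"

definition lsc_at_point :: "('x::topological_space \<Rightarrow> ereal) \<Rightarrow> 'x \<Rightarrow> bool" where
  "lsc_at_point g x0 \<longleftrightarrow> (\<forall>y. y < g x0 \<longrightarrow> eventually (\<lambda>x. y < g x) (nhds x0))"

end

theory Submission
  imports Defs
begin

text \<open>If \<open>f\<close> is Hausdorff upper continuous at \<open>x\<^sub>0\<close>, then near \<open>x\<^sub>0\<close> every value \<open>f x\<close> lies in
  \<open>f x\<^sub>0 + V\<close>, where \<open>V = {z. z\<^sup>*(z) < \<epsilon>}\<close> is an open neighbourhood of \<open>0\<close>. Hence every point of \<open>f x\<close>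
  is \<open>a + v\<close> with \<open>-z\<^sup>*(a) \<ge> \<phi>(x\<^sub>0)\<close> and \<open>z\<^sup>*(v) < \<epsilon>\<close>, so \<open>\<phi>(x) \<ge> \<phi>(x\<^sub>0) - \<epsilon>\<close>.\<close>

lemma INF_neg_linear_ge_of_subset_plus:
  fixes g :: "'z::real_vector \<Rightarrow> real"
  assumes "linear g"
    and "B \<subseteq> {a + v | a v. a \<in> A \<and> v \<in> V}"
    and "\<forall>v\<in>V. g v \<le> d"
    and "ereal c \<le> (INF a\<in>A. ereal (- g a))"
  shows "ereal (c - d) \<le> (INF z\<in>B. ereal (- g z))"
proof (rule INF_greatest)
  fix z assume "z \<in> B"
  then obtain a v where z: "z = a + v" and "a \<in> A" and "v \<in> V"
    using assms(2) by blast
  have "ereal c \<le> ereal (- g a)"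
    using assms(4) INF_lower[OF \<open>a \<in> A\<close>] by (rule order.trans)
  moreover have "g v \<le> d" and "g z = g a + g v"
    using assms(3) \<open>v \<in> V\<close> \<open>linear g\<close> z by (auto simp: linear_add)
  ultimately show "ereal (c - d) \<le> ereal (- g z)" by simp
qed

lemma hausdorff_upper_continuous_at_eventually_subset:
  assumes "hausdorff_upper_continuous_at f x0" and "open V" and "0 \<in> V"
  shows "eventually (\<lambda>x. f x \<subseteq> {a + v | a v. a \<in> f x0 \<and> v \<in> V}) (nhds x0)"
proof -
  have "\<exists>W. open W \<and> 0 \<in> W \<and> W \<subseteq> V"
    using assms(2,3) by blast
  then have "\<exists>U. (\<exists>G. open G \<and> x0 \<in> G \<and> G \<subseteq> U) \<and>
      (\<forall>x\<in>U. f x \<subseteq> {a + v | a v. a \<in> f x0 \<and> v \<in> V})"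
    using assms(1) unfolding hausdorff_upper_continuous_at_def by simp
  then show ?thesis
    unfolding eventually_nhds by blast
qed

lemma lsc_at_point_scalarization:
  assumes "hausdorff_upper_continuous_at f x0" and "zs \<in> topo_dual"
  shows "lsc_at_point (scalarization f zs) x0"
  unfolding lsc_at_point_def
proof (intro allI impI)
  fix y assume "y < scalarization f zs x0"
  from ereal_dense2[OF this] obtain c2 where "y < ereal c2" "ereal c2 < scalarization f zs x0"
    by blast
  obtain c1 where "y < ereal c1" "ereal c1 < ereal c2"
    using ereal_dense2[OF \<open>y < ereal c2\<close>] by blast
  then have "c1 < c2" by simp
  have "linear zs" and "continuous_on UNIV zs"
    using assms(2) by (auto simp: topo_dual_def)
  define V where "V = zs -` {..<c2 - c1}"
  have "open V"
    unfolding V_def using \<open>continuous_on UNIV zs\<close> by (rule open_vimage[OF open_lessThan])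
  moreover have "0 \<in> V"
    unfolding V_def using \<open>linear zs\<close> \<open>c1 < c2\<close> by (simp add: linear_0)
  ultimately have "eventually (\<lambda>x. f x \<subseteq> {a + v | a v. a \<in> f x0 \<and> v \<in> V}) (nhds x0)"
    using assms(1) by (rule hausdorff_upper_continuous_at_eventually_subset[rotated])
  then show "eventually (\<lambda>x. y < scalarization f zs x) (nhds x0)"
  proof (rule eventually_mono)
    fix x assume "f x \<subseteq> {a + v | a v. a \<in> f x0 \<and> v \<in> V}"
    moreover have "\<forall>v\<in>V. zs v \<le> c2 - c1"
      unfolding V_def by simp
    moreover have "ereal c2 \<le> (INF a\<in>f x0. ereal (- zs a))"
      using \<open>ereal c2 < scalarization f zs x0\<close> unfolding scalarization_def by simp
    ultimately have "ereal (c2 - (c2 - c1)) \<le> scalarization f zs x"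
      unfolding scalarization_def
      by (rule INF_neg_linear_ge_of_subset_plus[OF \<open>linear zs\<close>])
    then show "y < scalarization f zs x"
      using \<open>y < ereal c1\<close> by simp
  qed
qed

theorem mainTheorem14:
  fixes f :: "'x::topological_real_vector \<Rightarrow> 'z::topological_real_vector set"
    and C :: "'z set" and x0 :: 'x
  assumes "C \<noteq> {}" and "closed C" and "convex C" and "cone C"
    and "neg_polar C \<noteq> {(\<lambda>_. 0)}"
    and "\<forall>x. f x \<in> upper_closed_sets C"
    and "hausdorff_upper_continuous_at f x0"
  shows "\<forall>zs \<in> topo_dual. lsc_at_point (scalarization f zs) x0"
  using lsc_at_point_scalarization[OF assms(7)] by blast

end
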